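(* Let $\alpha<0$, $\theta>-\alpha$, and consider a mixture of BB models with mixing distribution for $N$; let $\mathbf Z^{(n)}$ have $K_n=k$ observed features. Then as $m\to\infty$, $K^{(n)}_m\mid\mathbf Z^{(n)}\xrightarrow{d}N'$ where $N'+k\overset d=N\mid\mathbf Z^{(n)}$. With $p_n(\theta,\alpha)=1-(\theta+\alpha)_n/(\theta)_n$: if $N\sim\mathrm{Poisson}(\lambda)$ then $N'\sim\mathrm{Poisson}(\lambda(1-p_n(\theta,\alpha)))$; if $N\sim\mathrm{NegBinomial}(n_0,\mu_0)$ then $$N'\sim\mathrm{NegBinomial}\Big(n_0+k,\frac{n_0+k}{n_0/\mu_0+p_n(\theta,\alpha)}\{1-p_n(\theta,\alpha)\}\Big).$$
   Context: $(x)_m=\Gamma(x+m)/\Gamma(x)$. The beta Bernoulli (BB) model with parameters $(N,\alpha,\theta)$ has exchangeable feature probability function (probability of any given ordered feature allocation of $[n]$ into $k$ nonempty sets of sizes $m_1,\dots,m_k$) $V^{\mathrm{BB}}_{n,k}(N)\prod_{\ell=1}^k(1-\alpha)_{m_\ell-1}(\theta+\alpha)_{n-m_\ell}$ with $V^{\mathrm{BB}}_{n,k}(N)=\binom Nk\{-\alpha/(\theta+\alpha)_n\}^k\{(\theta+\alpha)_n/(\theta)_n\}^N\mathbf 1\{0\le k\le N\}$. A mixture of BB models takes $N$ random with prior pmf $p_N$ and, given $N$, data from the BB model; its posterior is $P(N=y\mid\mathbf Z^{(n)})\propto p_N(y)\frac{y!}{(y-k)!}\big(\frac{(\theta+\alpha)_n}{(\theta)_n}\big)^y$,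 $y\ge k$. $K^{(n)}_m$ is the number of features displayed by individuals $n+1,\dots,n+m$ not among those observed in $\mathbf Z^{(n)}$. $\mathrm{NegBinomial}(n_0,\mu_0)$ has pmf $\binom{y+n_0-1}{y}p^{n_0}(1-p)^y$, $y\in\mathbb N_0$, $p=n_0/(\mu_0+n_0)$. *)

theory Defs
  imports "HOL-Probability.Probability"
begin

text \<open>Rising factorial (x)_m = pochhammer x m.  Ordered feature allocations of the
individuals {0..<n} are lists of nonempty subsets of {..<n}.\<close>

definition V_BB :: "real \<Rightarrow> real \<Rightarrow> nat \<Rightarrow> nat \<Rightarrow> nat \<Rightarrow> real" where
  "V_BB \<alpha> \<theta> n k N =
     (if k \<le> N then of_nat (N choose k) * (- \<alpha> / pochhammer (\<theta> + \<alpha>) n) ^ k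
        * (pochhammer (\<theta> + \<alpha>) n / pochhammer \<theta> n) ^ N else 0)"

definition efpf_BB :: "nat \<Rightarrow> real \<Rightarrow> real \<Rightarrow> nat \<Rightarrow> nat set list \<Rightarrow> real" where
  "efpf_BB N \<alpha> \<theta> n As =
     V_BB \<alpha> \<theta> n (length As) N *
     prod_list (map (\<lambda>A. pochhammer (1 - \<alpha>) (card A - 1) * pochhammer (\<theta> + \<alpha>) (n - card A)) As)"

definition efpf_mix :: "nat pmf \<Rightarrow> real \<Rightarrow> real \<Rightarrow> nat \<Rightarrow> nat set list \<Rightarrow> real" where
  "efpf_mix pN \<alpha> \<theta> n As = (\<Sum>N. pmf pN N * efpf_BB N \<alpha> \<theta> n As)"

definition post_N :: "nat pmf \<Rightarrow> real \<Rightarrow> real \<Rightarrow> nat \<Rightarrow> nat set list \<Rightarrow> nat \<Rightarrow> real" where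
  "post_N pN \<alpha> \<theta> n As y = pmf pN y * efpf_BB y \<alpha> \<theta> n As / efpf_mix pN \<alpha> \<theta> n As"

text \<open>Ordered allocations of [n+m] extending As (restriction to [n], dropping features
empty on [n], gives As) and having exactly j new features (features not displayed in [n]).\<close>
definition extensions :: "nat \<Rightarrow> nat \<Rightarrow> nat set list \<Rightarrow> nat \<Rightarrow> nat set list set" where
  "extensions n m As j =
     {Bs. length Bs = length As + j \<and> (\<forall>B\<in>set Bs. B \<noteq> {} \<and> B \<subseteq> {..<n+m}) \<and>
          map (\<lambda>B. B \<inter> {..<n}) (filter (\<lambda>B. B \<inter> {..<n} \<noteq> {}) Bs) = As}"

definition pred_K :: "nat pmf \<Rightarrow> real \<Rightarrow> real \<Rightarrow> nat \<Rightarrow> nat set list \<Rightarrow> nat \<Rightarrow> nat \<Rightarrow> real" where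
  "pred_K pN \<alpha> \<theta> n As m j =
     (\<Sum>Bs\<in>extensions n m As j. efpf_mix pN \<alpha> \<theta> (n + m) Bs) / efpf_mix pN \<alpha> \<theta> n As"

definition p_n :: "real \<Rightarrow> real \<Rightarrow> nat \<Rightarrow> real" where
  "p_n \<theta> \<alpha> n = 1 - pochhammer (\<theta> + \<alpha>) n / pochhammer \<theta> n"

definition negbin_pmf :: "real \<Rightarrow> real \<Rightarrow> nat \<Rightarrow> real" where
  "negbin_pmf n0 \<mu>0 y = (let p = n0 / (\<mu>0 + n0) in
     ((of_nat y + n0 - 1) gchoose y) * p powr n0 * (1 - p) ^ y)"

end

theory Submission
  imports Defs
begin

text \<open>Given \<open>N\<close>, the EFPF factorises into \<open>V_BB\<close> and one weight per feature. Summing over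
  all extensions of the observed allocation to \<open>n + m\<close> individuals, a Vandermonde identity for
  rising factorials shows that each displayed feature contributes \<open>(\<theta> + n)\<^sub>m\<close> and each new
  feature a difference of rising factorials. After normalisation,
  \<open>P(K\<^sub>m = j | Z) = \<Sum>\<^sub>N P(N | Z) Binomial(N - k, 1 - \<rho>\<^sub>m)(j)\<close>, where \<open>\<rho>\<^sub>m\<close> is the
  probability that a feature hidden from the first \<open>n\<close> individuals stays hidden from the next \<open>m\<close>.
  Since \<open>\<alpha> < 0\<close>, \<open>\<rho>\<^sub>m\<close> decays like \<open>m\<^sup>\<alpha>\<close>, so the binomial weights tend to the indicator of
  \<open>N = k + j\<close> and Tannery's theorem gives the limit. For Poisson and negative binomial priors the
  posterior \<open>P(N = k + j | Z) \<propto> p\<^sub>N(k + j) (k + j choose k) q\<^sup>k\<^sup>+\<^sup>j\<close>, with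
  \<open>q = 1 - p\<^sub>n(\<theta>, \<alpha>)\<close>, is summed in closed form.\<close>

section \<open>Binomial series and rising factorials\<close>

lemma sums_gbinomial_negative:
  fixes x b :: real
  assumes "\<bar>x\<bar> < 1"
  shows "(\<lambda>i. ((real i + b - 1) gchoose i) * x ^ i) sums (1 - x) powr (- b)"
proof -
  have "(\<lambda>i. ((- b) gchoose i) * (- x) ^ i) sums (1 + - x) powr (- b)"
    using assms by (intro gen_binomial_real) simp
  moreover have "((- b) gchoose i) * (- x) ^ i = ((real i + b - 1) gchoose i) * x ^ i" for i
  proof -
    have "((- b) gchoose i) * (- x) ^ i = ((-1) ^ i * (-1) ^ i) * ((b + real i - 1) gchoose i) * x ^ i"
      by (subst gbinomial_minus, subst power_minus) (simp add: mult_ac)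
    also have "(-1::real) ^ i * (-1) ^ i = 1"
      by (simp flip: power_add)
    finally show ?thesis by (simp add: add_ac)
  qed
  ultimately show ?thesis by simp
qed

lemma summable_binomial_mult_power:
  fixes q :: real
  assumes "0 \<le> q" "q < 1"
  shows "summable (\<lambda>N. real (N choose K) * q ^ N)"
proof -
  have "((real i + real (K + 1) - 1) gchoose i) = real ((i + K) choose K)" for i
  proof -
    have "real i + real (K + 1) - 1 = real (i + K)" by simp
    then show ?thesis
      by (simp only: binomial_gbinomial[symmetric]) (simp add: binomial_symmetric[of i "i+K"])
  qed
  moreover have "summable (\<lambda>i. ((real i + real (K + 1) - 1) gchoose i) * q ^ i)"
    by (rule sums_summable[OF sums_gbinomial_negative]) (use assms in simp)
  ultimately have "summable (\<lambda>i. real ((i + K) choose K) * q ^ i * q ^ K)"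
    by (intro summable_mult2) simp
  then show ?thesis
    by (subst summable_iff_shift[symmetric, of _ K]) (simp add: power_add mult_ac)
qed

lemma pochhammer_less_pochhammer:
  fixes x y :: real
  assumes "0 < x" "x < y"
  shows "pochhammer x (Suc n) < pochhammer y (Suc n)"
proof -
  have le: "pochhammer x n \<le> pochhammer y n" for n
  proof (induction n)
    case (Suc n)
    have "pochhammer x (Suc n) = (x + n) * pochhammer x n" by (rule pochhammer_rec')
    also have "\<dots> \<le> (y + n) * pochhammer y n"
      using Suc assms by (intro mult_mono) (auto intro: pochhammer_nonneg)
    finally show ?case by (simp add: pochhammer_rec')
  qed simp
  have "pochhammer x (Suc n) = (x + n) * pochhammer x n" by (rule pochhammer_rec')
  also have "\<dots> < (y + n) * pochhammer x n"
    using assms pochhammer_pos[of x n] by (intro mult_strict_right_mono) auto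
  also have "\<dots> \<le> (y + n) * pochhammer y n"
    using le[of n] assms by (intro mult_left_mono) auto
  finally show ?thesis by (simp add: pochhammer_rec')
qed

text \<open>By Gauss's product formula, \<open>(a)\<^sub>m\<^sub>+\<^sub>1 \<approx> m! m\<^sup>a / \<Gamma>(a)\<close>,
  so the ratio decays like \<open>m\<^sup>a\<^sup>-\<^sup>b\<close>.\<close>
lemma pochhammer_ratio_tendsto_0:
  fixes a b :: real
  assumes "0 < a" "a < b"
  shows "(\<lambda>m. pochhammer a m / pochhammer b m) \<longlonglongrightarrow> 0"
proof -
  have Gamma_series_pos: "Gamma_series z m > 0" if "z > 0" for z :: real and m
    using that pochhammer_pos[of z "m+1"] by (simp add: Gamma_series_def)
  have ratio_eq: "pochhammer a (Suc m) / pochhammer b (Suc m) =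
      exp ((a - b) * ln (real m)) * (Gamma_series b m / Gamma_series a m)" for m
  proof -
    have "pochhammer z (m+1) = fact m * exp (z * ln (real m)) / Gamma_series z m"
      if "z > 0" for z :: real
      using that Gamma_series_pos[of z m] pochhammer_pos[of z "m+1"]
      by (simp add: Gamma_series_def field_simps)
    then show ?thesis
      using Gamma_series_pos[of a m] Gamma_series_pos[of b m] assms
      by (simp add: exp_diff left_diff_distrib field_simps)
  qed
  have "(\<lambda>m. real m powr (a - b)) \<longlonglongrightarrow> 0"
    using assms by (intro tendsto_neg_powr filterlim_real_sequentially) auto
  moreover have "\<forall>\<^sub>F m in sequentially. real m powr (a - b) = exp ((a - b) * ln (real m))"
    using eventually_gt_at_top[of 0] by eventually_elim (simp add: powr_def mult.commute)
  ultimately have exp_tendsto: "(\<lambda>m. exp ((a - b) * ln (real m))) \<longlonglongrightarrow> 0"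
    using tendsto_cong by fastforce
  have "Gamma a \<noteq> 0" using assms by (auto simp: Gamma_eq_zero_iff elim!: nonpos_Ints_cases)
  then have "(\<lambda>m. Gamma_series b m / Gamma_series a m) \<longlonglongrightarrow> Gamma b / Gamma a"
    by (intro tendsto_divide Gamma_series_LIMSEQ)
  from tendsto_mult[OF exp_tendsto this]
  have "(\<lambda>m. pochhammer a (Suc m) / pochhammer b (Suc m)) \<longlonglongrightarrow> 0"
    unfolding ratio_eq by simp
  then show ?thesis by (rule LIMSEQ_imp_Suc)
qed

lemma sum_Pow_insert:
  assumes "finite X" "z \<notin> X"
  shows "(\<Sum>C\<in>Pow (insert z X). f C) = (\<Sum>C\<in>Pow X. f C) + (\<Sum>C\<in>Pow X. f (insert z C))"
proof -
  have "inj_on (insert z) (Pow X)"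
    using assms(2) by (intro inj_onI) (metis PowD insert_ident subsetD)
  moreover have "Pow X \<inter> insert z ` Pow X = {}" using assms(2) by auto
  ultimately show ?thesis
    unfolding Pow_insert using assms(1) by (simp add: sum.union_disjoint sum.reindex)
qed

text \<open>A Chu--Vandermonde identity for rising factorials, indexed by subsets.\<close>
lemma sum_Pow_pochhammer:
  fixes x y :: real
  assumes "finite X"
  shows "(\<Sum>C\<in>Pow X. pochhammer x (s + card C) * pochhammer y (t + card X - card C)) =
         pochhammer x s * pochhammer y t * pochhammer (x + y + s + t) (card X)"
  using assms
proof (induction X arbitrary: s t rule: finite_induct)
  case (insert z X)
  let ?S = "\<lambda>s t. \<Sum>C\<in>Pow X. pochhammer x (s + card C) * pochhammer y (t + card X - card C)"
  let ?f = "\<lambda>C. pochhammer x (s + card C) * pochhammer y (t + card (insert z X) - card C)"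
  have card_insert: "card (insert z C) = Suc (card C)" "card C \<le> card X" if "C \<in> Pow X" for C
  proof -
    have "finite C" "z \<notin> C" using that insert.hyps finite_subset by auto
    then show "card (insert z C) = Suc (card C)" by simp
    show "card C \<le> card X" using that insert.hyps(1) card_mono by auto
  qed
  have "(\<Sum>C\<in>Pow X. ?f C) = ?S s (Suc t)"
    using insert.hyps card_insert by (intro sum.cong) (auto simp: Suc_diff_le)
  moreover have "(\<Sum>C\<in>Pow X. ?f (insert z C)) = ?S (Suc s) t"
    using insert.hyps card_insert by (intro sum.cong) auto
  ultimately have "(\<Sum>C\<in>Pow (insert z X). ?f C) = ?S s (Suc t) + ?S (Suc s) t"
    using insert.hyps by (simp add: sum_Pow_insert)
  also have "\<dots> = pochhammer x s * pochhammer y (Suc t) * pochhammer (x + y + s + Suc t) (card X)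
      + pochhammer x (Suc s) * pochhammer y t * pochhammer (x + y + Suc s + t) (card X)"
    by (simp only: insert.IH)
  also have "\<dots> = pochhammer x s * pochhammer y t * pochhammer (x + y + s + t) (card (insert z X))"
  proof -
    have "pochhammer (x + y + s + t) (card (insert z X)) = (x + y + s + t) * pochhammer (x + y + s + t + 1) (card X)"
      using insert.hyps by (simp add: pochhammer_rec)
    then show ?thesis by (simp add: pochhammer_Suc algebra_simps)
  qed
  finally show ?case .
qed simp

section \<open>Extensions of a feature allocation\<close>

definition extensions_of_feature :: "nat \<Rightarrow> nat \<Rightarrow> nat set \<Rightarrow> nat set set" where
  "extensions_of_feature n m a = {B. B \<inter> {..<n} = a \<and> B \<subseteq> {..<n+m}}"

definition new_features :: "nat \<Rightarrow> nat \<Rightarrow> nat set set" where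
  "new_features n m = {B. B \<noteq> {} \<and> B \<inter> {..<n} = {} \<and> B \<subseteq> {..<n+m}}"

lemma extensions_of_feature_eq_image:
  assumes "a \<subseteq> {..<n}"
  shows "extensions_of_feature n m a = (\<lambda>C. a \<union> C) ` Pow {n..<n+m}"
proof (intro set_eqI iffI)
  fix B assume "B \<in> extensions_of_feature n m a"
  then have "B = a \<union> (B - {..<n})" "B - {..<n} \<in> Pow {n..<n+m}"
    by (auto simp: extensions_of_feature_def)
  then show "B \<in> (\<lambda>C. a \<union> C) ` Pow {n..<n+m}" by blast
qed (use assms in \<open>auto simp: extensions_of_feature_def\<close>)

lemma new_features_eq: "new_features n m = Pow {n..<n+m} - {{}}"
  by (auto simp: new_features_def subset_iff disjoint_iff not_less)

lemma finite_extensions_of_feature: "finite (extensions_of_feature n m a)"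
  by (rule finite_subset[of _ "Pow {..<n+m}"]) (auto simp: extensions_of_feature_def)

lemma finite_new_features: "finite (new_features n m)"
  by (simp add: new_features_eq)

lemma extensions_of_feature_disjoint_new_features:
  "a \<noteq> {} \<Longrightarrow> extensions_of_feature n m a \<inter> new_features n m = {}"
  by (auto simp: extensions_of_feature_def new_features_def)

lemma finite_extensions: "finite (extensions n m As j)"
  by (rule finite_subset[OF _ finite_lists_length_eq[of "Pow {..<n+m}" "length As + j"]])
     (auto simp: extensions_def)

lemma Nil_in_extensions_iff: "[] \<in> extensions n m As j \<longleftrightarrow> As = [] \<and> j = 0"
  by (auto simp: extensions_def)

lemma Cons_in_extensions_iff:
  "B # Bs \<in> extensions n m As j \<longleftrightarrow>
     (B \<in> new_features n m \<and> j > 0 \<and> Bs \<in> extensions n m As (j - 1)) \<or>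
     (\<exists>a As'. As = a # As' \<and> a \<noteq> {} \<and> B \<in> extensions_of_feature n m a \<and> Bs \<in> extensions n m As' j)"
proof
  assume ext: "B # Bs \<in> extensions n m As j"
  show "(B \<in> new_features n m \<and> j > 0 \<and> Bs \<in> extensions n m As (j - 1)) \<or>
     (\<exists>a As'. As = a # As' \<and> a \<noteq> {} \<and> B \<in> extensions_of_feature n m a \<and> Bs \<in> extensions n m As' j)"
  proof (cases "B \<inter> {..<n} = {}")
    case True
    then have As: "map (\<lambda>B. B \<inter> {..<n}) (filter (\<lambda>B. B \<inter> {..<n} \<noteq> {}) Bs) = As"
      using ext by (simp add: extensions_def)
    have "length As \<le> length Bs" unfolding As[symmetric] by (simp add: length_filter_le)
    then have "j > 0" using ext by (simp add: extensions_def)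
    then show ?thesis using ext True As by (auto simp: extensions_def new_features_def)
  next
    case False
    then show ?thesis using ext by (auto simp: extensions_def extensions_of_feature_def)
  qed
qed (auto simp: extensions_def new_features_def extensions_of_feature_def)

lemma extensions_Nil_0: "extensions n m [] 0 = {[]}"
  by (intro set_eqI, case_tac x) (auto simp: Nil_in_extensions_iff Cons_in_extensions_iff)

lemma extensions_Nil_Suc:
  "extensions n m [] (Suc j) = (\<lambda>(B, Bs). B # Bs) ` (new_features n m \<times> extensions n m [] j)"
  by (intro set_eqI, case_tac x) (auto simp: Nil_in_extensions_iff Cons_in_extensions_iff)

lemma extensions_Cons_0:
  "a \<noteq> {} \<Longrightarrow> extensions n m (a # As) 0 =
     (\<lambda>(B, Bs). B # Bs) ` (extensions_of_feature n m a \<times> extensions n m As 0)"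
  by (intro set_eqI, case_tac x) (auto simp: Nil_in_extensions_iff Cons_in_extensions_iff)

lemma extensions_Cons_Suc:
  "a \<noteq> {} \<Longrightarrow> extensions n m (a # As) (Suc j) =
     (\<lambda>(B, Bs). B # Bs) ` (extensions_of_feature n m a \<times> extensions n m As (Suc j)) \<union>
     (\<lambda>(B, Bs). B # Bs) ` (new_features n m \<times> extensions n m (a # As) j)"
  by (intro set_eqI, case_tac x) (auto simp: Nil_in_extensions_iff Cons_in_extensions_iff)

lemma sum_prod_list_Cons_image:
  fixes g :: "'a \<Rightarrow> 'b::comm_semiring_1"
  shows "(\<Sum>Bs\<in>(\<lambda>(B, Bs). B # Bs) ` (X \<times> Y). prod_list (map g Bs)) =
         (\<Sum>B\<in>X. g B) * (\<Sum>Bs\<in>Y. prod_list (map g Bs))"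
proof -
  have inj: "inj_on (\<lambda>(B, Bs). B # Bs) (X \<times> Y)" by (auto simp: inj_on_def)
  have "(\<Sum>Bs\<in>(\<lambda>(B, Bs). B # Bs) ` (X \<times> Y). prod_list (map g Bs)) =
        (\<Sum>(B, Bs)\<in>X \<times> Y. g B * prod_list (map g Bs))"
    by (subst sum.reindex[OF inj]) (simp add: case_prod_beta comp_def)
  also have "\<dots> = (\<Sum>B\<in>X. g B) * (\<Sum>Bs\<in>Y. prod_list (map g Bs))"
    by (simp add: sum_product sum.cartesian_product)
  finally show ?thesis .
qed

text \<open>The \<open>j\<close> new features can sit at any \<open>j\<close> of the \<open>k + j\<close> positions of an extension.\<close>
lemma sum_prod_list_extensions:
  fixes g :: "nat set \<Rightarrow> 'a::comm_semiring_1"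
  assumes "{} \<notin> set As"
  shows "(\<Sum>Bs\<in>extensions n m As j. prod_list (map g Bs)) =
     of_nat ((length As + j) choose j) *
     prod_list (map (\<lambda>a. \<Sum>B\<in>extensions_of_feature n m a. g B) As) *
     (\<Sum>B\<in>new_features n m. g B) ^ j"
  using assms
proof (induction As arbitrary: j)
  case Nil
  show ?case
    by (induction j) (simp_all add: extensions_Nil_0 extensions_Nil_Suc sum_prod_list_Cons_image)
next
  case (Cons a As)
  let ?G = "\<lambda>a. \<Sum>B\<in>extensions_of_feature n m a. g B" and ?H = "\<Sum>B\<in>new_features n m. g B"
  let ?S = "\<lambda>As j. \<Sum>Bs\<in>extensions n m As j. prod_list (map g Bs)"
  have a: "a \<noteq> {}" and IH: "\<And>j. ?S As j =
      of_nat ((length As + j) choose j) * prod_list (map ?G As) * ?H ^ j"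
    using Cons by auto
  show ?case
  proof (induction j)
    case 0
    show ?case using a IH[of 0] by (simp add: extensions_Cons_0 sum_prod_list_Cons_image)
  next
    case (Suc j)
    have disjoint: "(\<lambda>(B, Bs). B # Bs) ` (extensions_of_feature n m a \<times> extensions n m As (Suc j)) \<inter>
        (\<lambda>(B, Bs). B # Bs) ` (new_features n m \<times> extensions n m (a # As) j) = {}"
      using extensions_of_feature_disjoint_new_features[OF a] by auto
    have "?S (a # As) (Suc j) = ?G a * ?S As (Suc j) + ?H * ?S (a # As) j"
      unfolding extensions_Cons_Suc[OF a]
      by (subst sum.union_disjoint[OF _ _ disjoint])
         (simp_all add: sum_prod_list_Cons_image finite_extensions_of_feature finite_new_features
           finite_extensions)
    also have "\<dots> = (of_nat ((length As + Suc j) choose Suc j) + of_nat ((length As + Suc j) choose j)) *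
         (?G a * prod_list (map ?G As) * ?H ^ Suc j)"
      using IH[of "Suc j"] Suc by (simp add: algebra_simps del: binomial_Suc_Suc)
    also have "of_nat ((length As + Suc j) choose Suc j) + of_nat ((length As + Suc j) choose j) =
        (of_nat ((length (a # As) + Suc j) choose Suc j) :: 'a)"
      by (simp add: add_ac)
    finally show ?case by (simp add: algebra_simps del: binomial_Suc_Suc)
  qed
qed

section \<open>Factorisation of the EFPF\<close>

definition feature_weight :: "real \<Rightarrow> real \<Rightarrow> nat \<Rightarrow> nat set \<Rightarrow> real" where
  "feature_weight \<alpha> \<theta> M B = pochhammer (1 - \<alpha>) (card B - 1) * pochhammer (\<theta> + \<alpha>) (M - card B)"

lemma efpf_BB_eq_V_BB_mult:
  "efpf_BB N \<alpha> \<theta> M Bs = V_BB \<alpha> \<theta> M (length Bs) N * prod_list (map (feature_weight \<alpha> \<theta> M) Bs)"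
  unfolding efpf_BB_def feature_weight_def by simp

lemma feature_weight_pos: "\<alpha> < 0 \<Longrightarrow> \<theta> > - \<alpha> \<Longrightarrow> feature_weight \<alpha> \<theta> M B > 0"
  unfolding feature_weight_def by (auto intro!: mult_pos_pos pochhammer_pos)

lemma sum_feature_weight_extensions_of_feature:
  assumes "a \<noteq> {}" "a \<subseteq> {..<n}"
  shows "(\<Sum>B\<in>extensions_of_feature n m a. feature_weight \<alpha> \<theta> (n + m) B) =
    feature_weight \<alpha> \<theta> n a * pochhammer (\<theta> + n) m"
proof -
  have "finite a" using assms(2) finite_subset by blast
  then have card_a: "1 \<le> card a" "card a \<le> n"
    using assms card_mono[OF _ assms(2)] by (auto simp: Suc_le_eq card_gt_0_iff)
  have "a \<inter> {n..<n+m} = {}" using assms(2) by auto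
  then have inj: "inj_on (\<lambda>C. a \<union> C) (Pow {n..<n+m})"
    by (intro inj_onI) blast
  have card_Un: "card (a \<union> C) = card a + card C" "card C \<le> m" if "C \<in> Pow {n..<n+m}" for C
  proof -
    have "finite C" using that by (auto intro: finite_subset[of _ "{n..<n+m}"])
    moreover have "a \<inter> C = {}" using that assms(2) by fastforce
    ultimately
    show "card (a \<union> C) = card a + card C" using \<open>finite a\<close> by (simp add: card_Un_disjoint)
    show "card C \<le> m" using that card_mono[of "{n..<n+m}" C] by auto
  qed
  have "(\<Sum>B\<in>extensions_of_feature n m a. feature_weight \<alpha> \<theta> (n + m) B) =
      (\<Sum>C\<in>Pow {n..<n+m}. pochhammer (1 - \<alpha>) ((card a - 1) + card C) *
        pochhammer (\<theta> + \<alpha>) ((n - card a) + card {n..<n+m} - card C))"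
    unfolding extensions_of_feature_eq_image[OF assms(2)] sum.reindex[OF inj]
    using card_a card_Un by (intro sum.cong) (auto simp: feature_weight_def algebra_simps)
  also have "\<dots> = pochhammer (1 - \<alpha>) (card a - 1) * pochhammer (\<theta> + \<alpha>) (n - card a) *
      pochhammer (1 - \<alpha> + (\<theta> + \<alpha>) + real (card a - 1) + real (n - card a)) (card {n..<n+m})"
    by (rule sum_Pow_pochhammer) simp
  also have "1 - \<alpha> + (\<theta> + \<alpha>) + real (card a - 1) + real (n - card a) = \<theta> + n"
    using card_a by (simp add: of_nat_diff)
  finally show ?thesis by (simp add: feature_weight_def)
qed

lemma sum_feature_weight_new_features:
  "- \<alpha> * (\<Sum>B\<in>new_features n m. feature_weight \<alpha> \<theta> (n + m) B) =
     pochhammer (\<theta> + \<alpha>) n * pochhammer (\<theta> + n) m - pochhammer (\<theta> + \<alpha>) (n + m)"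
proof -
  let ?f = "\<lambda>C. pochhammer (- \<alpha>) (0 + card C) * pochhammer (\<theta> + \<alpha>) (n + card {n..<n+m} - card C)"
  have weight: "- \<alpha> * feature_weight \<alpha> \<theta> (n + m) C = ?f C" if "C \<in> Pow {n..<n+m} - {{}}" for C
  proof -
    have "finite C" "C \<noteq> {}" using that by (auto intro: finite_subset[of _ "{n..<n+m}"])
    then have "card C = Suc (card C - 1)" by (simp add: card_gt_0_iff)
    then have "pochhammer (- \<alpha>) (card C) = - \<alpha> * pochhammer (1 - \<alpha>) (card C - 1)"
      by (metis pochhammer_rec diff_conv_add_uminus add.commute)
    then show ?thesis by (simp add: feature_weight_def)
  qed
  have "- \<alpha> * (\<Sum>B\<in>new_features n m. feature_weight \<alpha> \<theta> (n + m) B) =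
      (\<Sum>C\<in>Pow {n..<n+m} - {{}}. ?f C)"
    unfolding new_features_eq sum_distrib_left using weight by (rule sum.cong[OF refl])
  also have "\<dots> = (\<Sum>C\<in>Pow {n..<n+m}. ?f C) - ?f {}"
    by (subst sum_diff1) auto
  also have "(\<Sum>C\<in>Pow {n..<n+m}. ?f C) =
      pochhammer (- \<alpha>) 0 * pochhammer (\<theta> + \<alpha>) n *
        pochhammer (- \<alpha> + (\<theta> + \<alpha>) + real 0 + real n) (card {n..<n+m})"
    by (rule sum_Pow_pochhammer) simp
  finally show ?thesis by simp
qed

lemma BB_ratio_bounds:
  fixes \<alpha> \<theta> :: real
  assumes "\<alpha> < 0" "\<theta> > - \<alpha>"
  shows "0 < pochhammer (\<theta> + \<alpha>) M / pochhammer \<theta> M"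
    and "pochhammer (\<theta> + \<alpha>) M / pochhammer \<theta> M \<le> 1"
    and "0 < M \<Longrightarrow> pochhammer (\<theta> + \<alpha>) M / pochhammer \<theta> M < 1"
proof -
  have pos: "pochhammer (\<theta> + \<alpha>) M > 0" "pochhammer \<theta> M > 0"
    using assms by (auto intro!: pochhammer_pos)
  then show "0 < pochhammer (\<theta> + \<alpha>) M / pochhammer \<theta> M" by simp
  show less: "0 < M \<Longrightarrow> pochhammer (\<theta> + \<alpha>) M / pochhammer \<theta> M < 1"
    using pos pochhammer_less_pochhammer[of "\<theta> + \<alpha>" \<theta> "M - 1"] assms by simp
  show "pochhammer (\<theta> + \<alpha>) M / pochhammer \<theta> M \<le> 1"
    using less by (cases M) auto
qed

lemma V_BB_nonneg:
  assumes "\<alpha> < 0" "\<theta> > - \<alpha>"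
  shows "V_BB \<alpha> \<theta> M K N \<ge> 0"
proof -
  have "pochhammer (\<theta> + \<alpha>) M > 0" using assms by (intro pochhammer_pos) simp
  then have "0 \<le> - \<alpha> / pochhammer (\<theta> + \<alpha>) M" using assms by (simp add: divide_nonpos_pos)
  moreover have "0 \<le> pochhammer (\<theta> + \<alpha>) M / pochhammer \<theta> M"
    by (rule less_imp_le[OF BB_ratio_bounds(1)[OF assms]])
  ultimately show ?thesis unfolding V_BB_def by simp
qed


lemma summable_pmf_nat: "summable (pmf (p :: nat pmf))"
  using pmf_abs_summable[of p UNIV] by (simp add: abs_summable_on_nat_iff')

lemma summable_pmf_mult_V_BB:
  fixes \<alpha> \<theta> :: real
  assumes "\<alpha> < 0" "\<theta> > - \<alpha>" "0 < M \<or> K = 0"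
  shows "summable (\<lambda>N. pmf pN N * V_BB \<alpha> \<theta> M K N)"
proof -
  let ?q = "pochhammer (\<theta> + \<alpha>) M / pochhammer \<theta> M"
  let ?c = "(- \<alpha> / pochhammer (\<theta> + \<alpha>) M) ^ K"
  have q: "0 \<le> ?q" "?q \<le> 1" using BB_ratio_bounds[OF assms(1,2)] by (simp_all add: less_imp_le)
  have norm_le: "norm (pmf pN N * V_BB \<alpha> \<theta> M K N) \<le> V_BB \<alpha> \<theta> M K N" for N
    using V_BB_nonneg[OF assms(1,2)] pmf_le_1[of pN N] by (simp add: abs_mult mult_left_le_one_le)
  show ?thesis
  proof (cases "K = 0")
    case True
    show ?thesis
    proof (rule summable_comparison_test'[OF summable_pmf_nat])
      fix N
      have "V_BB \<alpha> \<theta> M K N = ?q ^ N" using True by (simp add: V_BB_def)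
      then show "norm (pmf pN N * V_BB \<alpha> \<theta> M K N) \<le> pmf pN N"
        using q by (simp add: abs_mult mult_left_le power_le_one)
    qed
  next
    case False
    then have "?q < 1" using BB_ratio_bounds(3)[OF assms(1,2)] assms(3) by blast
    then have "summable (\<lambda>N. ?c * (real (N choose K) * ?q ^ N))"
      using q by (intro summable_mult summable_binomial_mult_power)
    moreover have "V_BB \<alpha> \<theta> M K N \<le> ?c * (real (N choose K) * ?q ^ N)" for N
      unfolding V_BB_def by (simp add: binomial_eq_0 mult_ac)
    ultimately show ?thesis
      using norm_le order_trans by (blast intro: summable_comparison_test')
  qed
qed

lemma efpf_mix_eq_suminf:
  assumes "summable (\<lambda>N. pmf pN N * V_BB \<alpha> \<theta> M (length Bs) N)"
  shows "efpf_mix pN \<alpha> \<theta> M Bs =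
    (\<Sum>N. pmf pN N * V_BB \<alpha> \<theta> M (length Bs) N) * prod_list (map (feature_weight \<alpha> \<theta> M) Bs)"
  unfolding efpf_mix_def efpf_BB_eq_V_BB_mult by (subst suminf_mult2[OF assms]) (simp add: mult.assoc)

lemma post_N_eq:
  "post_N pN \<alpha> \<theta> n As N = pmf pN N * V_BB \<alpha> \<theta> n (length As) N *
     prod_list (map (feature_weight \<alpha> \<theta> n) As) / efpf_mix pN \<alpha> \<theta> n As"
  unfolding post_N_def efpf_BB_eq_V_BB_mult by (simp add: mult.assoc)

lemma post_N_eq_0_below: "y < length As \<Longrightarrow> post_N pN \<alpha> \<theta> n As y = 0"
  by (simp add: post_N_eq V_BB_def)

lemma summable_pmf_mult_V_BB_allocation:
  fixes \<alpha> \<theta> :: real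
  assumes "\<alpha> < 0" "\<theta> > - \<alpha>" "\<forall>A\<in>set As. A \<noteq> {} \<and> A \<subseteq> {..<n}"
  shows "summable (\<lambda>N. pmf pN N * V_BB \<alpha> \<theta> n (length As) N)"
proof (rule summable_pmf_mult_V_BB[OF assms(1,2)])
  show "0 < n \<or> length As = 0" using assms(3) by (cases As) auto
qed

lemma summable_post_N:
  fixes \<alpha> \<theta> :: real
  assumes "\<alpha> < 0" "\<theta> > - \<alpha>" "\<forall>A\<in>set As. A \<noteq> {} \<and> A \<subseteq> {..<n}"
  shows "summable (post_N pN \<alpha> \<theta> n As)"
  unfolding post_N_eq[abs_def]
  by (intro summable_divide summable_mult2 summable_pmf_mult_V_BB_allocation[OF assms])

lemma post_N_nonneg:
  fixes \<alpha> \<theta> :: real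
  assumes "\<alpha> < 0" "\<theta> > - \<alpha>" "efpf_mix pN \<alpha> \<theta> n As > 0"
  shows "post_N pN \<alpha> \<theta> n As N \<ge> 0"
proof -
  have "prod_list (map (feature_weight \<alpha> \<theta> n) As) \<ge> 0"
    using feature_weight_pos[OF assms(1,2)] by (intro prod_list_nonneg) (auto intro: less_imp_le)
  then show ?thesis
    unfolding post_N_eq using assms V_BB_nonneg[OF assms(1,2)]
    by (auto intro!: divide_nonneg_pos mult_nonneg_nonneg)
qed

section \<open>Limit of the predictive distribution\<close>

text \<open>The conditional probability, under the BB model, that a feature not displayed by the first
  \<open>n\<close> individuals is not displayed by the next \<open>m\<close> either.\<close>
definition hidden_prob :: "real \<Rightarrow> real \<Rightarrow> nat \<Rightarrow> nat \<Rightarrow> real" where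
  "hidden_prob \<theta> \<alpha> n m = pochhammer (\<theta> + n + \<alpha>) m / pochhammer (\<theta> + n) m"

lemma hidden_prob_bounds:
  assumes "\<alpha> < 0" "\<theta> > - \<alpha>"
  shows "0 \<le> hidden_prob \<theta> \<alpha> n m" "hidden_prob \<theta> \<alpha> n m \<le> 1"
  using BB_ratio_bounds[of \<alpha> "\<theta> + n" m] assms by (simp_all add: hidden_prob_def less_imp_le)

lemma hidden_prob_tendsto_0:
  assumes "\<alpha> < 0" "\<theta> > - \<alpha>"
  shows "hidden_prob \<theta> \<alpha> n \<longlonglongrightarrow> 0"
  unfolding hidden_prob_def[abs_def] using assms by (intro pochhammer_ratio_tendsto_0) auto

lemma binomial_thinning_identity:
  fixes c P Q R Q' :: real
  assumes pos: "c > 0" "P > 0" "Q > 0" "R > 0" "Q' > 0" and N: "k + j \<le> N"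
  shows "real (N choose (k + j)) * (c / (P * R)) ^ (k + j) * (P * R / (Q * Q')) ^ N *
      (real ((k + j) choose j) * Q' ^ k * (P * (Q' - R) / c) ^ j)
    = real (N choose k) * (c / P) ^ k * (P / Q) ^ N *
      (real ((N - k) choose j) * ((Q' - R) / Q') ^ j * (R / Q') ^ (N - k - j))"
proof -
  obtain r where r: "N = k + j + r" using N le_Suc_ex by blast
  have "(N choose (k + j)) * ((k + j) choose k) = (N choose k) * ((N - k) choose (k + j - k))"
    by (rule choose_mult) (use N in auto)
  then have binomials: "real (N choose (k + j)) * real ((k + j) choose j) =
      real (N choose k) * real ((N - k) choose j)"
    by (metis add_diff_cancel_left' binomial_symmetric le_add1 of_nat_mult)
  have "(c / (P * R)) ^ (k + j) * (P * R / (Q * Q')) ^ N * Q' ^ k * (P * (Q' - R) / c) ^ j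
      = (c / P) ^ k * (P / Q) ^ N * (((Q' - R) / Q') ^ j * (R / Q') ^ (N - k - j))"
  proof -
    have "(P * (Q' - R) / c) ^ j = P ^ j * (Q' - R) ^ j / c ^ j"
      by (simp add: power_mult_distrib power_divide)
    then show ?thesis
      using pos unfolding r by (simp add: power_add power_mult_distrib power_divide field_simps)
  qed
  then have "real (N choose (k + j)) * real ((k + j) choose j) *
      ((c / (P * R)) ^ (k + j) * (P * R / (Q * Q')) ^ N * Q' ^ k * (P * (Q' - R) / c) ^ j)
    = real (N choose k) * real ((N - k) choose j) *
      ((c / P) ^ k * (P / Q) ^ N * (((Q' - R) / Q') ^ j * (R / Q') ^ (N - k - j)))"
    unfolding binomials by simp
  then show ?thesis by (simp add: mult_ac)
qed

lemma V_BB_extend_eq_binomial: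
  fixes \<alpha> \<theta> :: real and n m :: nat
  assumes "\<alpha> < 0" "\<theta> > - \<alpha>"
  defines "P \<equiv> pochhammer (\<theta> + \<alpha>) n" and "Q' \<equiv> pochhammer (\<theta> + n) m"
    and "R \<equiv> pochhammer (\<theta> + n + \<alpha>) m"
  shows "V_BB \<alpha> \<theta> (n + m) (k + j) N * (real ((k + j) choose j) * Q' ^ k * (P * (Q' - R) / - \<alpha>) ^ j) =
    V_BB \<alpha> \<theta> n k N *
      (if k \<le> N then pmf (binomial_pmf (N - k) (1 - hidden_prob \<theta> \<alpha> n m)) j else 0)"
proof -
  define Q where "Q = pochhammer \<theta> n"
  have pos: "- \<alpha> > 0" "P > 0" "Q > 0" "R > 0" "Q' > 0"
    using assms by (auto simp: P_def Q_def R_def Q'_def intro!: pochhammer_pos)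
  have pochhammer_add: "pochhammer (\<theta> + \<alpha>) (n + m) = P * R" "pochhammer \<theta> (n + m) = Q * Q'"
    unfolding P_def Q_def R_def Q'_def by (simp_all only: pochhammer_product') (simp_all add: add_ac)
  have pmf_eq: "pmf (binomial_pmf (N - k) (1 - hidden_prob \<theta> \<alpha> n m)) j =
      real ((N - k) choose j) * ((Q' - R) / Q') ^ j * (R / Q') ^ (N - k - j)"
    using hidden_prob_bounds[OF assms(1,2), of n m] pos
    by (simp add: hidden_prob_def R_def Q'_def diff_divide_distrib)
  show ?thesis
  proof (cases "k + j \<le> N")
    case True
    then show ?thesis
      using binomial_thinning_identity[OF pos True]
      by (simp add: V_BB_def pochhammer_add pmf_eq P_def Q_def)
  next
    case False
    then show ?thesis by (simp add: V_BB_def pmf_eq binomial_eq_0)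
  qed
qed

lemma sum_extensions_prod_feature_weight:
  fixes \<alpha> \<theta> :: real and n m :: nat
  assumes "\<alpha> < 0" and As: "\<forall>A\<in>set As. A \<noteq> {} \<and> A \<subseteq> {..<n}"
  defines "P \<equiv> pochhammer (\<theta> + \<alpha>) n" and "Q' \<equiv> pochhammer (\<theta> + n) m"
    and "R \<equiv> pochhammer (\<theta> + n + \<alpha>) m"
  shows "(\<Sum>Bs\<in>extensions n m As j. prod_list (map (feature_weight \<alpha> \<theta> (n + m)) Bs)) =
    prod_list (map (feature_weight \<alpha> \<theta> n) As) *
      (real ((length As + j) choose j) * Q' ^ length As * (P * (Q' - R) / - \<alpha>) ^ j)"
proof -
  have "prod_list (map (\<lambda>a. \<Sum>B\<in>extensions_of_feature n m a. feature_weight \<alpha> \<theta> (n + m) B) As) =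
      prod_list (map (feature_weight \<alpha> \<theta> n) As) * Q' ^ length As"
    using As by (induction As) (auto simp: sum_feature_weight_extensions_of_feature Q'_def)
  moreover have "(\<Sum>B\<in>new_features n m. feature_weight \<alpha> \<theta> (n + m) B) = P * (Q' - R) / - \<alpha>"
  proof -
    have "pochhammer (\<theta> + \<alpha>) (n + m) = P * R"
      unfolding P_def R_def by (simp only: pochhammer_product') (simp add: add_ac)
    then have "- \<alpha> * (\<Sum>B\<in>new_features n m. feature_weight \<alpha> \<theta> (n + m) B) = P * (Q' - R)"
      unfolding sum_feature_weight_new_features Q'_def P_def by (simp add: right_diff_distrib)
    then show ?thesis using \<open>\<alpha> < 0\<close> by (simp add: field_simps)
  qed
  moreover have "{} \<notin> set As" using As by auto
  ultimately show ?thesis by (simp add: sum_prod_list_extensions mult_ac)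
qed

lemma pred_K_eq_suminf_binomial:
  fixes \<alpha> \<theta> :: real
  assumes "\<alpha> < 0" "\<theta> > - \<alpha>" and As: "\<forall>A\<in>set As. A \<noteq> {} \<and> A \<subseteq> {..<n}" and "0 < m"
  shows "pred_K pN \<alpha> \<theta> n As m j = (\<Sum>N. post_N pN \<alpha> \<theta> n As N *
    (if length As \<le> N then pmf (binomial_pmf (N - length As) (1 - hidden_prob \<theta> \<alpha> n m)) j else 0))"
proof -
  define k where "k = length As"
  define W where "W = (\<lambda>N. pmf pN N * V_BB \<alpha> \<theta> (n + m) (k + j) N)"
  define T where "T = real ((k + j) choose j) * pochhammer (\<theta> + n) m ^ k *
    (pochhammer (\<theta> + \<alpha>) n * (pochhammer (\<theta> + n) m - pochhammer (\<theta> + n + \<alpha>) m) / - \<alpha>) ^ j"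
  define F where "F = prod_list (map (feature_weight \<alpha> \<theta> n) As)"
  define E where "E = efpf_mix pN \<alpha> \<theta> n As"
  have W: "summable W"
    unfolding W_def using assms(1,2,4) by (intro summable_pmf_mult_V_BB) auto
  have "efpf_mix pN \<alpha> \<theta> (n + m) Bs = suminf W * prod_list (map (feature_weight \<alpha> \<theta> (n + m)) Bs)"
    if "Bs \<in> extensions n m As j" for Bs
  proof -
    have "length Bs = k + j" using that by (simp add: extensions_def k_def)
    then show ?thesis using W efpf_mix_eq_suminf[of pN \<alpha> \<theta> "n + m" Bs] by (simp add: W_def)
  qed
  then have "pred_K pN \<alpha> \<theta> n As m j =
      (\<Sum>Bs\<in>extensions n m As j. suminf W * prod_list (map (feature_weight \<alpha> \<theta> (n + m)) Bs)) / E"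
    unfolding pred_K_def E_def by simp
  also have "\<dots> = suminf W * (F * T) / E"
    using sum_extensions_prod_feature_weight[OF assms(1) As]
    by (simp only: sum_distrib_left[symmetric]) (simp add: T_def F_def k_def)
  also have "\<dots> = (\<Sum>N. W N * T) * F / E"
    by (simp add: suminf_mult[OF W] mult_ac)
  also have "\<dots> = (\<Sum>N. W N * T * F / E)"
    using W by (simp add: suminf_mult2 suminf_divide summable_mult2)
  also have "\<dots> = (\<Sum>N. post_N pN \<alpha> \<theta> n As N *
    (if k \<le> N then pmf (binomial_pmf (N - k) (1 - hidden_prob \<theta> \<alpha> n m)) j else 0))"
    using V_BB_extend_eq_binomial[OF assms(1,2), of n m k j]
    by (simp add: W_def T_def F_def E_def post_N_eq k_def mult_ac)
  finally show ?thesis unfolding k_def .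
qed

lemma tendsto_pmf_binomial_pmf_1:
  assumes "\<And>m. 0 \<le> p m" "\<And>m. p m \<le> 1" "p \<longlonglongrightarrow> 1"
  shows "(\<lambda>m. pmf (binomial_pmf a (p m)) j) \<longlonglongrightarrow> (if j = a then 1 else 0)"
proof -
  have "(\<lambda>m. real (a choose j) * p m ^ j * (1 - p m) ^ (a - j)) \<longlonglongrightarrow>
      real (a choose j) * 1 ^ j * (1 - 1) ^ (a - j)"
    by (intro tendsto_intros assms)
  moreover have "real (a choose j) * 1 ^ j * (1 - 1) ^ (a - j) = (if j = a then 1 else 0)"
    by (cases "j < a") (auto simp: binomial_eq_0)
  ultimately show ?thesis using assms(1,2) by simp
qed

lemma tendsto_suminf_mult_indicator:
  fixes f :: "nat \<Rightarrow> real" and w :: "nat \<Rightarrow> nat \<Rightarrow> real"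
  assumes "summable f" "\<And>N. 0 \<le> f N"
    and "\<forall>\<^sub>F m in sequentially. \<forall>N. 0 \<le> w m N \<and> w m N \<le> 1"
    and "\<And>N. (\<lambda>m. w m N) \<longlonglongrightarrow> (if N = K then 1 else 0)"
  shows "(\<lambda>m. \<Sum>N. f N * w m N) \<longlonglongrightarrow> f K"
proof -
  have "\<forall>\<^sub>F (N, m) in sequentially \<times>\<^sub>F sequentially. \<forall>N'. 0 \<le> w m N' \<and> w m N' \<le> 1"
    using assms(3) by (simp add: eventually_prod2)
  then have bound: "\<forall>\<^sub>F (N, m) in sequentially \<times>\<^sub>F sequentially. norm (f N * w m N) \<le> f N"
    by (rule eventually_mono) (auto simp: abs_mult mult_left_le assms(2))
  have "\<And>N. (\<lambda>m. f N * w m N) \<longlonglongrightarrow> f N * (if N = K then 1 else 0)"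
    by (intro tendsto_mult tendsto_const assms(4))
  from tannerys_theorem[OF this bound assms(1)]
  have "(\<lambda>m. \<Sum>N. f N * w m N) \<longlonglongrightarrow> (\<Sum>N. f N * (if N = K then 1 else 0))"
    by simp
  moreover have "(\<Sum>N. f N * (if N = K then 1 else 0)) = f K"
    using sums_unique[OF sums_single[of K f]] by (simp add: if_distrib cong: if_cong)
  ultimately show ?thesis by simp
qed

lemma pred_K_tendsto_post_N:
  fixes \<alpha> \<theta> :: real
  assumes "\<alpha> < 0" "\<theta> > - \<alpha>" and As: "\<forall>A\<in>set As. A \<noteq> {} \<and> A \<subseteq> {..<n}"
    and "efpf_mix pN \<alpha> \<theta> n As > 0"
  shows "(\<lambda>m. pred_K pN \<alpha> \<theta> n As m j) \<longlonglongrightarrow> post_N pN \<alpha> \<theta> n As (length As + j)"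
proof -
  define w where "w = (\<lambda>m N. if length As \<le> N then pmf (binomial_pmf (N - length As) (1 - hidden_prob \<theta> \<alpha> n m)) j else 0)"
  have \<rho>: "0 \<le> 1 - hidden_prob \<theta> \<alpha> n m" "1 - hidden_prob \<theta> \<alpha> n m \<le> 1" for m
    using hidden_prob_bounds[OF assms(1,2)] by auto
  have "(\<lambda>m. 1 - hidden_prob \<theta> \<alpha> n m) \<longlonglongrightarrow> 1"
    using tendsto_diff[OF tendsto_const hidden_prob_tendsto_0[OF assms(1,2)], of 1] by simp
  note binomial_tendsto = tendsto_pmf_binomial_pmf_1[OF \<rho> this]
  have "(\<lambda>m. w m N) \<longlonglongrightarrow> (if N = length As + j then 1 else 0)" for N
  proof (cases "length As \<le> N")
    case True
    then have "(j = N - length As) = (N = length As + j)" by linarith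
    then show ?thesis using True binomial_tendsto[of "N - length As" j] by (simp add: w_def)
  qed (simp add: w_def)
  moreover have "\<forall>N. 0 \<le> w m N \<and> w m N \<le> 1" for m
    by (simp add: w_def pmf_le_1)
  ultimately have "(\<lambda>m. \<Sum>N. post_N pN \<alpha> \<theta> n As N * w m N) \<longlonglongrightarrow> post_N pN \<alpha> \<theta> n As (length As + j)"
    using summable_post_N[OF assms(1-3)] post_N_nonneg[OF assms(1,2,4)]
    by (intro tendsto_suminf_mult_indicator) auto
  moreover have "\<forall>\<^sub>F m in sequentially. (\<Sum>N. post_N pN \<alpha> \<theta> n As N * w m N) = pred_K pN \<alpha> \<theta> n As m j"
    using eventually_gt_at_top[of 0]
    by eventually_elim (simp add: pred_K_eq_suminf_binomial[OF assms(1-3)] w_def)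
  ultimately show ?thesis by (rule Lim_transform_eventually)
qed

section \<open>Closed-form posteriors\<close>

lemma post_N_eq_of_sums:
  fixes \<alpha> \<theta> :: real
  assumes "\<alpha> < 0" "\<theta> > - \<alpha>" and As: "\<forall>A\<in>set As. A \<noteq> {} \<and> A \<subseteq> {..<n}"
    and "efpf_mix pN \<alpha> \<theta> n As > 0"
    and weights: "\<And>i. pmf pN (i + length As) * V_BB \<alpha> \<theta> n (length As) (i + length As) = A * t i"
    and "t sums T"
  shows "post_N pN \<alpha> \<theta> n As (length As + j) = t j / T"
proof -
  define g where "g = (\<lambda>N. pmf pN N * V_BB \<alpha> \<theta> n (length As) N)"
  have "(\<lambda>i. g (i + length As)) sums (A * T)"
    unfolding g_def weights by (rule sums_mult[OF \<open>t sums T\<close>])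
  then have "g sums (A * T)"
    using sums_zero_iff_shift[of "length As" g] by (simp add: g_def V_BB_def)
  then have "efpf_mix pN \<alpha> \<theta> n As = A * T * prod_list (map (feature_weight \<alpha> \<theta> n) As)"
    using efpf_mix_eq_suminf summable_pmf_mult_V_BB_allocation[OF assms(1-3)]
    by (simp add: g_def sums_iff)
  then show ?thesis
    using weights[of j] assms(4) by (auto simp: post_N_eq add.commute field_simps)
qed

lemma post_N_poisson:
  fixes \<alpha> \<theta> :: real
  assumes "\<alpha> < 0" "\<theta> > - \<alpha>" and As: "\<forall>A\<in>set As. A \<noteq> {} \<and> A \<subseteq> {..<n}"
    and "efpf_mix pN \<alpha> \<theta> n As > 0" and "lam > 0" and "pN = poisson_pmf lam"
  shows "post_N pN \<alpha> \<theta> n As (length As + j) = pmf (poisson_pmf (lam * (1 - p_n \<theta> \<alpha> n))) j"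
proof -
  define k where "k = length As"
  define q where "q = pochhammer (\<theta> + \<alpha>) n / pochhammer \<theta> n"
  define A where "A = exp (- lam) * (- \<alpha> / pochhammer (\<theta> + \<alpha>) n) ^ k * (lam * q) ^ k / fact k"
  have q: "q > 0" "1 - p_n \<theta> \<alpha> n = q"
    using BB_ratio_bounds(1)[OF assms(1,2)] by (simp_all add: q_def p_n_def)
  have weights: "pmf pN (i + k) * V_BB \<alpha> \<theta> n k (i + k) = A * ((lam * q) ^ i / fact i)" for i
  proof -
    have "V_BB \<alpha> \<theta> n k (i + k) =
        fact (i + k) / (fact k * fact i) * (- \<alpha> / pochhammer (\<theta> + \<alpha>) n) ^ k * q ^ (i + k)"
      by (simp add: V_BB_def binomial_fact q_def)
    then show ?thesis
      using \<open>lam > 0\<close> \<open>pN = poisson_pmf lam\<close>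
      by (simp add: A_def field_simps power_add power_mult_distrib)
  qed
  have "(\<lambda>i. (lam * q) ^ i / fact i) sums exp (lam * q)"
    using exp_converges[of "lam * q"] by (simp add: divide_inverse mult.commute)
  from post_N_eq_of_sums[OF assms(1-4) weights[unfolded k_def] this]
  have "post_N pN \<alpha> \<theta> n As (length As + j) = (lam * q) ^ j / fact j / exp (lam * q)" .
  then show ?thesis
    unfolding q(2) using \<open>lam > 0\<close> q(1) by (simp add: exp_minus field_simps)
qed

lemma gbinomial_rising_mult_binomial:
  fixes n0 :: real
  shows "((real (i + k) + n0 - 1) gchoose (i + k)) * real ((i + k) choose k) =
         ((real k + n0 - 1) gchoose k) * ((real i + (n0 + real k) - 1) gchoose i)"
proof -
  have "pochhammer n0 (i + k) = pochhammer n0 k * pochhammer (n0 + real k) i"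
    using pochhammer_product'[of n0 k i] by (simp add: add.commute)
  then show ?thesis
    by (simp add: gbinomial_pochhammer' binomial_fact field_simps)
qed

lemma negbin_success_prob:
  fixes n0 \<mu>0 b q :: real
  assumes "n0 > 0" "\<mu>0 > 0" "b > 0" "0 \<le> q" "q \<le> 1"
  shows "b / (b / (n0 / \<mu>0 + (1 - q)) * q + b) = 1 - \<mu>0 / (\<mu>0 + n0) * q"
proof -
  define d where "d = n0 / \<mu>0 + (1 - q)"
  have d: "d > 0" "q + d > 0" using assms by (simp_all add: d_def add_pos_nonneg)
  have "b / d * q + b = b * (q + d) / d"
    using d by (simp add: field_simps)
  then have "b / (b / d * q + b) = d / (q + d)"
    using d assms by simp
  also have "\<dots> = (\<mu>0 + n0 - \<mu>0 * q) / (\<mu>0 + n0)"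
  proof -
    have "q + d = (\<mu>0 + n0) / \<mu>0" "d = (\<mu>0 + n0 - \<mu>0 * q) / \<mu>0"
      using assms by (simp_all add: d_def field_simps)
    then show ?thesis using assms by simp
  qed
  also have "\<dots> = 1 - \<mu>0 / (\<mu>0 + n0) * q"
    using assms by (simp add: field_simps)
  finally show ?thesis by (simp add: d_def)
qed

lemma post_N_negbin:
  fixes \<alpha> \<theta> n0 \<mu>0 :: real
  assumes "\<alpha> < 0" "\<theta> > - \<alpha>" and As: "\<forall>A\<in>set As. A \<noteq> {} \<and> A \<subseteq> {..<n}"
    and "efpf_mix pN \<alpha> \<theta> n As > 0"
    and "n0 > 0" "\<mu>0 > 0" and prior: "\<forall>y. pmf pN y = negbin_pmf n0 \<mu>0 y"
  shows "post_N pN \<alpha> \<theta> n As (length As + j) =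
    negbin_pmf (n0 + real (length As))
      ((n0 + real (length As)) / (n0 / \<mu>0 + p_n \<theta> \<alpha> n) * (1 - p_n \<theta> \<alpha> n)) j"
proof -
  define k where "k = length As"
  define b where "b = n0 + real k"
  define q where "q = pochhammer (\<theta> + \<alpha>) n / pochhammer \<theta> n"
  define p where "p = n0 / (\<mu>0 + n0)"
  define x where "x = (1 - p) * q"
  define A where "A = ((real k + n0 - 1) gchoose k) * p powr n0 * (1 - p) ^ k *
    (- \<alpha> / pochhammer (\<theta> + \<alpha>) n) ^ k * q ^ k"
  have q: "0 < q" "q \<le> 1" "p_n \<theta> \<alpha> n = 1 - q"
    using BB_ratio_bounds[OF assms(1,2)] by (simp_all add: q_def p_n_def)
  have p: "0 < p" "p < 1" using assms(5,6) by (simp_all add: p_def)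
  have "0 \<le> x" "x \<le> 1 - p" unfolding x_def using p q by (auto intro: mult_left_le)
  then have x: "\<bar>x\<bar> < 1" using p by linarith
  have weights: "pmf pN (i + k) * V_BB \<alpha> \<theta> n k (i + k) = A * (((real i + b - 1) gchoose i) * x ^ i)" for i
  proof -
    have "pmf pN (i + k) * V_BB \<alpha> \<theta> n k (i + k) =
        (((real (i + k) + n0 - 1) gchoose (i + k)) * real ((i + k) choose k)) *
        p powr n0 * (1 - p) ^ (i + k) * (- \<alpha> / pochhammer (\<theta> + \<alpha>) n) ^ k * q ^ (i + k)"
      by (simp add: prior negbin_pmf_def Let_def V_BB_def p_def q_def mult_ac)
    then show ?thesis
      unfolding gbinomial_rising_mult_binomial
      by (simp add: A_def x_def b_def power_add power_mult_distrib mult_ac)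
  qed
  from post_N_eq_of_sums[OF assms(1-4) weights[unfolded k_def] sums_gbinomial_negative[OF x]]
  have "post_N pN \<alpha> \<theta> n As (length As + j) = ((real j + b - 1) gchoose j) * x ^ j / (1 - x) powr (- b)" .
  also have "\<dots> = ((real j + b - 1) gchoose j) * (1 - x) powr b * x ^ j"
    by (simp add: powr_minus divide_inverse)
  also have "\<dots> = negbin_pmf b (b / (n0 / \<mu>0 + p_n \<theta> \<alpha> n) * (1 - p_n \<theta> \<alpha> n)) j"
  proof -
    have "b / (b / (n0 / \<mu>0 + (1 - q)) * q + b) = 1 - x"
      using negbin_success_prob[of n0 \<mu>0 b q] assms(5,6) q
      by (simp add: b_def x_def p_def field_simps)
    then show ?thesis
      unfolding q(3) negbin_pmf_def Let_def by (simp add: mult_ac)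
  qed
  finally show ?thesis by (simp add: b_def k_def)
qed

theorem proposition8:
  fixes \<alpha> \<theta> :: real and pN :: "nat pmf" and n :: nat and As :: "nat set list"
  assumes "\<alpha> < 0" and "\<theta> > - \<alpha>"
    and "\<forall>A\<in>set As. A \<noteq> {} \<and> A \<subseteq> {..<n}"
    and "efpf_mix pN \<alpha> \<theta> n As > 0"
  shows "(\<forall>y < length As. post_N pN \<alpha> \<theta> n As y = 0) \<and>
         (\<forall>j. (\<lambda>m. pred_K pN \<alpha> \<theta> n As m j) \<longlonglongrightarrow> post_N pN \<alpha> \<theta> n As (length As + j)) \<and>
         (\<forall>lam > 0. pN = poisson_pmf lam \<longrightarrow>
            (\<forall>j. post_N pN \<alpha> \<theta> n As (length As + j)
                 = pmf (poisson_pmf (lam * (1 - p_n \<theta> \<alpha> n))) j)) \<and>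
         (\<forall>n0 \<mu>0. n0 > 0 \<and> \<mu>0 > 0 \<and> (\<forall>y. pmf pN y = negbin_pmf n0 \<mu>0 y) \<longrightarrow>
            (\<forall>j. post_N pN \<alpha> \<theta> n As (length As + j)
                 = negbin_pmf (n0 + real (length As))
                     ((n0 + real (length As)) / (n0 / \<mu>0 + p_n \<theta> \<alpha> n) * (1 - p_n \<theta> \<alpha> n)) j))"
  using post_N_eq_0_below pred_K_tendsto_post_N[OF assms] post_N_poisson[OF assms]
    post_N_negbin[OF assms] by blast

end
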